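(* For every non-constant total symmetric Boolean function $f:\{0,1\}^n\to\{0,1\}$ with $n\ge 2$, $\mathrm{MM}'(f)=O(\sqrt{t_f\cdot n})$.
   Context: A Boolean function $f:\{0,1\}^n\to\{0,1\}$ is symmetric if $f(x)$ depends only on the Hamming weight $|x|$ (number of ones). For such $f$, $t_f$ is the minimum nonnegative integer $t$ such that $f$ is constant on all inputs $x$ with $t\le|x|\le n-t$. For $f$ with domain $D\subseteq\{0,1\}^n$, \[ \mathrm{MM}'(f)=\min_{w}\max_{x\in D}\sum_{i\in[n]} w(x,i) \] over weight functions $w:D\times[n]\to\mathbb{R}_{\ge0}$ subject to $\sum_{i:x_i\neq y_i} w(x,i)\,w(y,i)\ge 1$ for all $x,y\in D$ with $f(x)\neq f(y)$. *)

theory Defs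
  imports Complex_Main
begin

text \<open>Inputs in {0,1}^n are represented as boolean lists of length n
  (True = 1); coordinates are indexed by positions 0..n-1.\<close>

definition cube :: "nat \<Rightarrow> bool list set" where
  "cube n = {x. length x = n}"

definition hw :: "bool list \<Rightarrow> nat" where
  "hw x = count_list x True"

definition symmetric_fn :: "nat \<Rightarrow> (bool list \<Rightarrow> bool) \<Rightarrow> bool" where
  "symmetric_fn n f \<longleftrightarrow> (\<forall>x\<in>cube n. \<forall>y\<in>cube n. hw x = hw y \<longrightarrow> f x = f y)"

definition nonconstant_fn :: "nat \<Rightarrow> (bool list \<Rightarrow> bool) \<Rightarrow> bool" where
  "nonconstant_fn n f \<longleftrightarrow> (\<exists>x\<in>cube n. \<exists>y\<in>cube n. f x \<noteq> f y)"

definition t_f :: "nat \<Rightarrow> (bool list \<Rightarrow> bool) \<Rightarrow> nat" where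
  "t_f n f = (LEAST t. \<forall>x\<in>cube n. \<forall>y\<in>cube n.
      t \<le> hw x \<and> hw x \<le> n - t \<and> t \<le> hw y \<and> hw y \<le> n - t \<longrightarrow> f x = f y)"

definition feasible_weight ::
  "bool list set \<Rightarrow> nat \<Rightarrow> (bool list \<Rightarrow> bool) \<Rightarrow> (bool list \<Rightarrow> nat \<Rightarrow> real) \<Rightarrow> bool" where
  "feasible_weight D n f w \<longleftrightarrow>
     (\<forall>x\<in>D. \<forall>i<n. 0 \<le> w x i) \<and>
     (\<forall>x\<in>D. \<forall>y\<in>D. f x \<noteq> f y \<longrightarrow>
        1 \<le> (\<Sum>i\<in>{i. i < n \<and> x ! i \<noteq> y ! i}. w x i * w y i))"

definition MM' :: "bool list set \<Rightarrow> nat \<Rightarrow> (bool list \<Rightarrow> bool) \<Rightarrow> real" where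
  "MM' D n f = Inf ((\<lambda>w. Max ((\<lambda>x. \<Sum>i<n. w x i) ` D)) ` {w. feasible_weight D n f w})"

end

theory Submission
  imports Defs
begin

text \<open>Give coordinate i of an input x of weight k the weight a(k) if x_i = 1 and a(n - k) if
  x_i = 0, where a(l) = max (1/r) (r / max 1 (l - t + 1)), t = t_f and r = sqrt(n/t).
  If f x \<noteq> f y with |x| = k < l = |y|, then k < t or l > n - t, and at least l - k positions
  have x_i = 0, y_i = 1; on each, one factor is at least 1/r and the other at least r/(l - k),
  so the constraint holds. The total weight of x is at most n/r + 2rt = 3 sqrt(tn).\<close>

lemma hw_eq_card: "length x = n \<Longrightarrow> hw x = card {i. i < n \<and> x ! i}"
  unfolding hw_def count_list_eq_length_filter length_filter_conv_card by metis

lemma hw_le_length: "hw x \<le> length x"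
  unfolding hw_def by (rule count_le_length)

lemma finite_cube: "finite (cube n)"
proof -
  have "cube n = {xs. set xs \<subseteq> UNIV \<and> length xs = n}" unfolding cube_def by auto
  then show ?thesis using finite_lists_length_eq[of "UNIV :: bool set" n] by simp
qed

lemma cube_nonempty: "cube n \<noteq> {}"
  unfolding cube_def by (auto intro: exI[of _ "replicate n False"])

lemma hw_le_hw_plus_card_flips:
  assumes "length x = n" "length y = n"
  shows "hw y \<le> hw x + card {i. i < n \<and> \<not> x ! i \<and> y ! i}"
proof -
  have "card {i. i < n \<and> y ! i}
      \<le> card ({i. i < n \<and> x ! i} \<union> {i. i < n \<and> \<not> x ! i \<and> y ! i})"
    by (intro card_mono) auto
  also have "\<dots> \<le> card {i. i < n \<and> x ! i} + card {i. i < n \<and> \<not> x ! i \<and> y ! i}"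
    by (rule card_Un_le)
  finally show ?thesis using hw_eq_card assms by simp
qed

lemma t_f_constant_between:
  assumes "x \<in> cube n" "y \<in> cube n"
    and "t_f n f \<le> hw x" "hw x \<le> n - t_f n f" "t_f n f \<le> hw y" "hw y \<le> n - t_f n f"
  shows "f x = f y"
proof -
  let ?P = "\<lambda>t. \<forall>x\<in>cube n. \<forall>y\<in>cube n.
      t \<le> hw x \<and> hw x \<le> n - t \<and> t \<le> hw y \<and> hw y \<le> n - t \<longrightarrow> f x = f y"
  have "?P n" by (auto simp: cube_def)
  then have "?P (t_f n f)" unfolding t_f_def by (rule LeastI)
  then show ?thesis using assms by blast
qed

lemma t_f_le: "t_f n f \<le> n"
  unfolding t_f_def by (rule Least_le) (auto simp: cube_def)

lemma t_f_pos:
  assumes "nonconstant_fn n f"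
  shows "1 \<le> t_f n f"
proof (rule ccontr)
  assume "\<not> 1 \<le> t_f n f"
  moreover obtain x y where "x \<in> cube n" "y \<in> cube n" "f x \<noteq> f y"
    using assms unfolding nonconstant_fn_def by blast
  ultimately show False
    using t_f_constant_between[of x n y f] hw_le_length[of x] hw_le_length[of y]
    by (auto simp: cube_def)
qed

definition class_weight :: "(nat \<Rightarrow> real) \<Rightarrow> (nat \<Rightarrow> real) \<Rightarrow> bool list \<Rightarrow> nat \<Rightarrow> real" where
  "class_weight a b x i = (if x ! i then a (hw x) else b (hw x))"

lemma sum_class_weight:
  assumes "length x = n"
  shows "(\<Sum>i<n. class_weight a b x i) = real (hw x) * a (hw x) + real (n - hw x) * b (hw x)"
proof -
  have ones: "{..<n} \<inter> {i. x ! i} = {i. i < n \<and> x ! i}"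
    and zeros: "{..<n} \<inter> - {i. x ! i} = {..<n} - {i. i < n \<and> x ! i}" by auto
  have "card ({..<n} - {i. i < n \<and> x ! i}) = n - hw x"
    using hw_eq_card[OF assms] by (subst card_Diff_subset) auto
  then show ?thesis
    unfolding class_weight_def sum.If_cases[OF finite_lessThan] ones zeros
    using hw_eq_card[OF assms] by simp
qed

lemma feasible_class_weight:
  assumes sym: "symmetric_fn n f"
    and nonneg: "\<And>k. 0 \<le> a k" "\<And>k. 0 \<le> b k"
    and separated: "\<And>x y. x \<in> cube n \<Longrightarrow> y \<in> cube n \<Longrightarrow> f x \<noteq> f y \<Longrightarrow> hw x < hw y \<Longrightarrow>
      1 \<le> real (hw y - hw x) * (b (hw x) * a (hw y))"
  shows "feasible_weight (cube n) n f (class_weight a b)"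
proof -
  let ?w = "class_weight a b"
  have nonneg_w: "0 \<le> ?w x i" for x i
    unfolding class_weight_def using nonneg by simp
  have lower: "1 \<le> (\<Sum>i\<in>{i. i < n \<and> x ! i \<noteq> y ! i}. ?w x i * ?w y i)"
    if "x \<in> cube n" "y \<in> cube n" "f x \<noteq> f y" "hw x < hw y" for x y
  proof -
    define flips where "flips = {i. i < n \<and> \<not> x ! i \<and> y ! i}"
    have "hw y - hw x \<le> card flips"
      using hw_le_hw_plus_card_flips[of x n y] that(1,2) unfolding flips_def cube_def by simp
    then have "real (hw y - hw x) * (b (hw x) * a (hw y))
        \<le> real (card flips) * (b (hw x) * a (hw y))"
      using nonneg by (intro mult_right_mono) auto
    also have "\<dots> = (\<Sum>i\<in>flips. ?w x i * ?w y i)"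
      unfolding flips_def class_weight_def by simp
    also have "\<dots> \<le> (\<Sum>i\<in>{i. i < n \<and> x ! i \<noteq> y ! i}. ?w x i * ?w y i)"
      using nonneg_w by (intro sum_mono2) (auto simp: flips_def)
    finally show ?thesis using separated[OF that] by linarith
  qed
  have "1 \<le> (\<Sum>i\<in>{i. i < n \<and> x ! i \<noteq> y ! i}. ?w x i * ?w y i)"
    if "x \<in> cube n" "y \<in> cube n" "f x \<noteq> f y" for x y
  proof -
    have "hw x \<noteq> hw y" using sym that unfolding symmetric_fn_def by blast
    then consider "hw x < hw y" | "hw y < hw x" by linarith
    then show ?thesis
    proof cases
      case 2
      then show ?thesis
        using lower[of y x] that by (simp add: mult.commute eq_commute[of "x ! _"])
    qed (use lower that in blast)
  qed
  then show ?thesis unfolding feasible_weight_def using nonneg_w by blast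
qed

lemma MM'_le_of_feasible:
  assumes "finite D" "D \<noteq> {}" "feasible_weight D n f w"
    and bound: "\<And>x. x \<in> D \<Longrightarrow> (\<Sum>i<n. w x i) \<le> B"
  shows "MM' D n f \<le> B"
proof -
  let ?cost = "\<lambda>w. Max ((\<lambda>x. \<Sum>i<n. w x i) ` D)"
  have "bdd_below (?cost ` {w. feasible_weight D n f w})"
  proof (rule bdd_belowI)
    fix c assume "c \<in> ?cost ` {w. feasible_weight D n f w}"
    then obtain u where u: "feasible_weight D n f u" and c: "c = ?cost u" by blast
    obtain x where x: "x \<in> D" using assms(2) by blast
    have "0 \<le> (\<Sum>i<n. u x i)" using u x unfolding feasible_weight_def by (intro sum_nonneg) auto
    also have "\<dots> \<le> c" unfolding c using x assms(1) by (intro Max_ge) auto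
    finally show "0 \<le> c" .
  qed
  then have "MM' D n f \<le> ?cost w"
    unfolding MM'_def by (rule cInf_lower[rotated]) (use assms(3) in blast)
  also have "\<dots> \<le> B" using bound assms(1,2) by (subst Max_le_iff) auto
  finally show ?thesis .
qed

definition profile :: "nat \<Rightarrow> real \<Rightarrow> nat \<Rightarrow> real" where
  "profile t r l = max (1 / r) (r / max 1 (real l - real t + 1))"

lemma inverse_le_profile: "1 / r \<le> profile t r l"
  unfolding profile_def by simp

lemma profile_nonneg: "0 < r \<Longrightarrow> 0 \<le> profile t r l"
  by (rule order_trans[OF _ inverse_le_profile]) simp

lemma divide_le_profile:
  assumes "0 \<le> r" "max 1 (real l - real t + 1) \<le> d"
  shows "r / d \<le> profile t r l"
proof -
  have "r / d \<le> r / max 1 (real l - real t + 1)"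
    using assms by (intro divide_left_mono) auto
  then show ?thesis unfolding profile_def by linarith
qed

lemma mult_profile_le:
  assumes "1 \<le> t" "0 < r"
  shows "real l * profile t r l \<le> real l / r + r * real t"
proof -
  have "real l \<le> real t * max 1 (real l - real t + 1)"
  proof (cases "l \<le> t")
    case False
    then have "0 \<le> (real t - 1) * (real l - real t)" using assms(1) by simp
    then have "real l \<le> real t * (real l - real t + 1)" by (simp add: algebra_simps)
    also have "\<dots> \<le> real t * max 1 (real l - real t + 1)" by (intro mult_left_mono) auto
    finally show ?thesis .
  qed (simp add: mult_left_mono)
  then have "real l * (r / max 1 (real l - real t + 1)) \<le> r * real t"
    using assms(2) by (simp add: field_simps)
  moreover have "profile t r l \<le> 1 / r + r / max 1 (real l - real t + 1)"
    unfolding profile_def using assms(2) by simp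
  then have "real l * profile t r l \<le> real l * (1 / r) + real l * (r / max 1 (real l - real t + 1))"
    by (metis distrib_left mult_left_mono of_nat_0_le_iff)
  ultimately show ?thesis by simp
qed

lemma profile_pair_bound:
  assumes "k < l" "l \<le> n" "k < t \<or> n - t < l" "0 < r"
  shows "1 \<le> real (l - k) * (profile t r (n - k) * profile t r l)"
proof -
  have d: "0 < real l - real k" using assms(1) by simp
  have "1 / r * (r / (real l - real k)) \<le> profile t r (n - k) * profile t r l"
  proof (cases "k < t")
    case True
    have "r / (real l - real k) \<le> profile t r l"
      using True assms(1,4) by (intro divide_le_profile) auto
    then show ?thesis using inverse_le_profile[of r t "n - k"] d assms(4) profile_nonneg
      by (intro mult_mono) auto
  next
    case False
    then have "n - t < l" using assms(3) by simp
    then have "r / (real l - real k) \<le> profile t r (n - k)"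
      using assms(1,2,4) by (intro divide_le_profile) (auto simp: of_nat_diff)
    then show ?thesis using inverse_le_profile[of r t l] d assms(4) profile_nonneg
      by (subst mult.commute, intro mult_mono) auto
  qed
  then show ?thesis using d assms(1,4) by (simp add: of_nat_diff field_simps)
qed

lemma cost_profile_le:
  assumes "1 \<le> t" "0 < r" "k \<le> n"
  shows "real k * profile t r k + real (n - k) * profile t r (n - k) \<le> real n / r + 2 * r * real t"
  using mult_profile_le[OF assms(1,2), of k] mult_profile_le[OF assms(1,2), of "n - k"] assms(3)
  by (simp add: of_nat_diff diff_divide_distrib)

theorem mainTheorem5:
  shows "\<exists>C>0. \<forall>n\<ge>2. \<forall>f :: bool list \<Rightarrow> bool.
           symmetric_fn n f \<and> nonconstant_fn n f \<longrightarrow>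
           MM' (cube n) n f \<le> C * sqrt (real (t_f n f) * real n)"
proof (intro exI[of _ 3] conjI allI impI)
  fix n :: nat and f :: "bool list \<Rightarrow> bool"
  assume "symmetric_fn n f \<and> nonconstant_fn n f"
  then have sym: "symmetric_fn n f" and t1: "1 \<le> t_f n f" using t_f_pos by auto
  define t where "t = t_f n f"
  define r where "r = sqrt (real n / real t)"
  have tn: "t \<le> n" and r: "0 < r" using t1 t_f_le[of n f] by (auto simp: t_def r_def)
  have r_eq: "real n / r = sqrt (real t * real n)" "r * real t = sqrt (real t * real n)"
    using t1 tn by (auto simp: r_def t_def real_sqrt_divide real_sqrt_mult field_simps
        simp flip: real_sqrt_mult_self[of "real t"])
  have "feasible_weight (cube n) n f (class_weight (profile t r) (\<lambda>k. profile t r (n - k)))"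
  proof (rule feasible_class_weight[OF sym profile_nonneg[OF r] profile_nonneg[OF r]])
    fix x y assume "x \<in> cube n" "y \<in> cube n" "f x \<noteq> f y" "hw x < hw y"
    moreover from this have "hw x < t \<or> n - t < hw y"
      using t_f_constant_between[of x n y f] unfolding t_def by linarith
    ultimately show "1 \<le> real (hw y - hw x) * (profile t r (n - hw x) * profile t r (hw y))"
      using hw_le_length[of y] r by (intro profile_pair_bound) (auto simp: cube_def)
  qed
  then have "MM' (cube n) n f \<le> real n / r + 2 * r * real t"
    by (rule MM'_le_of_feasible[OF finite_cube cube_nonempty])
      (use sum_class_weight cost_profile_le t1 r hw_le_length in \<open>auto simp: cube_def t_def\<close>)
  then show "MM' (cube n) n f \<le> 3 * sqrt (real (t_f n f) * real n)"
    using r_eq unfolding t_def by linarith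
qed simp

end
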